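(* Let $(X,\mathcal{B},\mu,T)$ be a rigid measure preserving system (with $\mu$ $\sigma$-finite on a standard space). Then every quasi-factor of $(X,\mathcal{B},\mu,T)$ is rigid.
   Context: A measure preserving system $(X,\mathcal{B},\mu,T)$ is rigid if there is a strictly increasing sequence $(n_k)_{k\ge0}$ of integers such that $T^{n_k}f\to f$ in $L^2(\mu)$ for all $f\in L^2(\mu)$ (equivalently, $\mu(T^{-n_k}A\triangle A)\to0$ for all $A\in\mathcal{B}$ of finite measure). $X^*$ denotes the set of all measures on $(X,\mathcal{B})$, with $\sigma$-algebra $\mathcal{B}^*$ generated by the sets $\{\gamma:\gamma(B)\in[a,b]\}$, $B\in\mathcal{B}$, $0\le a\le b\le\infty$, and $T_*\gamma=\gamma\circ T^{-1}$. A quasi-factor of $(X,\mathcal{B},\mu,T)$ is a probability preserving system $(X^*,\mathcal{B}^*,\xi,T_* )$ where $\xi$ is a $T_*$-invariant probability on $X^*$ with barycenter $\mu$, i.e. $\int f\,d\mu=\int\big(\int f\,d\gamma\big)d\xi(\gamma)$ for all $f\in L^1(\mu)$. *)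

theory Defs
  imports "HOL-Probability.Probability"
begin

definition mps :: "'a measure \<Rightarrow> ('a \<Rightarrow> 'a) \<Rightarrow> bool" where
  "mps M T \<longleftrightarrow> T \<in> measurable M M \<and> distr M M T = M"

definition rigid :: "'a measure \<Rightarrow> ('a \<Rightarrow> 'a) \<Rightarrow> bool" where
  "rigid M T \<longleftrightarrow> (\<exists>n :: nat \<Rightarrow> nat. strict_mono n \<and>
     (\<forall>A \<in> sets M. emeasure M A < \<infinity> \<longrightarrow>
        ((\<lambda>k. emeasure M ((((T ^^ n k) -` A \<inter> space M) - A) \<union> (A - ((T ^^ n k) -` A \<inter> space M))))
          \<longlongrightarrow> 0) sequentially))"

definition standard_borel_via :: "'a measure \<Rightarrow> 'b::polish_space set \<Rightarrow> bool" where
  "standard_borel_via M S \<longleftrightarrow> S \<in> sets borel \<and>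
     (\<exists>f g. f \<in> M \<rightarrow>\<^sub>M restrict_space borel S \<and> g \<in> restrict_space borel S \<rightarrow>\<^sub>M M \<and>
        (\<forall>x \<in> space M. g (f x) = x) \<and> (\<forall>y \<in> S. f (g y) = y))"

definition Xstar :: "'a measure \<Rightarrow> 'a measure measure" where
  "Xstar M = sigma {\<gamma>. sets \<gamma> = sets M}
     {{\<gamma>. sets \<gamma> = sets M \<and> emeasure \<gamma> B \<in> {a..b}} | B a b. B \<in> sets M \<and> a \<le> b}"

definition Tstar :: "'a measure \<Rightarrow> ('a \<Rightarrow> 'a) \<Rightarrow> 'a measure \<Rightarrow> 'a measure" where
  "Tstar M T \<gamma> = distr \<gamma> M T"

definition quasi_factor :: "'a measure \<Rightarrow> ('a \<Rightarrow> 'a) \<Rightarrow> 'a measure measure \<Rightarrow> bool" where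
  "quasi_factor M T \<xi> \<longleftrightarrow> prob_space \<xi> \<and> sets \<xi> = sets (Xstar M) \<and>
     distr \<xi> \<xi> (Tstar M T) = \<xi> \<and>
     (\<forall>f \<in> borel_measurable M.
        (\<integral>\<^sup>+ x. f x \<partial>M) = (\<integral>\<^sup>+ \<gamma>. (\<integral>\<^sup>+ x. f x \<partial>\<gamma>) \<partial>\<xi>))"

end

theory Submission
  imports Defs
begin

text \<open>
  Let n_k be a rigidity sequence for T. For B of finite measure the sets
  D_k = T^-n_k B \<triangle> B satisfy \<mu>(D_k) \<rightarrow> 0, and since \<mu> is the barycenter of \<xi>,
  Markov's inequality gives \<xi>{\<gamma>. \<gamma>(D_k) \<ge> \<delta>} \<rightarrow> 0. So \<gamma>(B) is nearly invariant under
  T_*^n_k, and the level set {\<gamma>. \<gamma>(B) \<le> c} is rigid for T_* up to the thin strip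
  {\<gamma>. c < \<gamma>(B) \<le> c + \<delta>}, whose \<xi>-measure vanishes as \<delta> \<rightarrow> 0. The sets that are rigid
  along a fixed sequence form a \<sigma>-algebra of a finite measure preserving system; by
  \<sigma>-finiteness of \<mu> it contains the level sets for every measurable B, and these
  generate the \<sigma>-algebra of X^*.
\<close>

lemma tendsto_zero_if_approximated_ennreal:
  fixes a v :: "nat \<Rightarrow> ennreal" and w :: "nat \<Rightarrow> nat \<Rightarrow> ennreal"
  assumes bound: "\<And>j k. a k \<le> v j + w j k"
    and v: "v \<longlonglongrightarrow> 0" and w: "\<And>j. w j \<longlonglongrightarrow> 0"
  shows "a \<longlonglongrightarrow> 0"
proof (rule tendsto_0_if_Limsup_eq_0_ennreal)
  have "limsup a \<le> v j" for j
  proof -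
    have "limsup a \<le> limsup (\<lambda>k. v j + w j k)"
      using bound by (intro Limsup_mono) auto
    also have "\<dots> = v j"
      using lim_imp_Limsup[OF _ w[of j]] by (simp add: Limsup_const_add)
    finally show ?thesis .
  qed
  then have "limsup a \<le> 0"
    using v by (intro tendsto_lowerbound) auto
  then show "limsup a = 0"
    by simp
qed

lemma measurable_funpow:
  assumes "S \<in> M \<rightarrow>\<^sub>M M"
  shows "S ^^ j \<in> M \<rightarrow>\<^sub>M M"
  by (induction j) (auto intro: measurable_compose[OF _ assms])

lemma mps_funpow:
  assumes "mps M S"
  shows "mps M (S ^^ j)"
proof (induction j)
  case 0
  then show ?case
    by (simp add: mps_def id_def distr_id2)
next
  case (Suc j)
  have S: "S \<in> M \<rightarrow>\<^sub>M M" and "distr M M S = M"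
    using assms by (auto simp: mps_def)
  then have "distr M M (S ^^ j \<circ> S) = distr M M (S ^^ j)"
    using distr_distr[OF measurable_funpow[OF S] S] by simp
  then show ?case
    using Suc measurable_funpow[OF S, of "Suc j"]
    unfolding mps_def funpow_Suc_right[of j] by simp
qed

lemma emeasure_vimage_mps:
  assumes "mps M S" and "A \<in> sets M"
  shows "emeasure M (S -` A \<inter> space M) = emeasure M A"
  using assms emeasure_distr[of S M M A] by (auto simp: mps_def)

definition rigidity_sets :: "'a measure \<Rightarrow> ('a \<Rightarrow> 'a) \<Rightarrow> (nat \<Rightarrow> nat) \<Rightarrow> 'a set set" where
  "rigidity_sets M S n = {A \<in> sets M.
     (\<lambda>k. emeasure M (sym_diff ((S ^^ n k) -` A \<inter> space M) A)) \<longlonglongrightarrow> 0}"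

lemma rigid_iff_rigidity_sets:
  "rigid M S \<longleftrightarrow>
     (\<exists>n. strict_mono n \<and> {A \<in> sets M. emeasure M A < \<infinity>} \<subseteq> rigidity_sets M S n)"
  unfolding rigid_def rigidity_sets_def by blast

lemma rigidity_sets_empty: "{} \<in> rigidity_sets M S n"
  by (simp add: rigidity_sets_def)

lemma rigidity_sets_Diff:
  assumes S: "S \<in> M \<rightarrow>\<^sub>M M" and A: "A \<in> rigidity_sets M S n"
  shows "space M - A \<in> rigidity_sets M S n"
proof -
  have "sym_diff ((S ^^ n k) -` (space M - A) \<inter> space M) (space M - A)
      = sym_diff ((S ^^ n k) -` A \<inter> space M) A" for k
    using measurable_space[OF measurable_funpow[OF S]] sets.sets_into_space[of A M] A
    by (auto simp: rigidity_sets_def)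
  then show ?thesis
    using A by (auto simp: rigidity_sets_def)
qed

lemma rigidity_sets_Un:
  assumes S: "S \<in> M \<rightarrow>\<^sub>M M"
    and A: "A \<in> rigidity_sets M S n" and B: "B \<in> rigidity_sets M S n"
  shows "A \<union> B \<in> rigidity_sets M S n"
proof -
  let ?d = "\<lambda>k X. sym_diff ((S ^^ n k) -` X \<inter> space M) X"
  have sets: "A \<in> sets M" "B \<in> sets M" "\<And>k X. X \<in> sets M \<Longrightarrow> ?d k X \<in> sets M"
    using A B measurable_sets[OF measurable_funpow[OF S]] by (auto simp: rigidity_sets_def)
  have bound: "emeasure M (?d k (A \<union> B)) \<le> emeasure M (?d k A) + emeasure M (?d k B)" for k
  proof -
    have "emeasure M (?d k (A \<union> B)) \<le> emeasure M (?d k A \<union> ?d k B)"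
      using sets by (intro emeasure_mono) auto
    also have "\<dots> \<le> emeasure M (?d k A) + emeasure M (?d k B)"
      using sets by (intro emeasure_subadditive) auto
    finally show ?thesis .
  qed
  have lim: "(\<lambda>k. emeasure M (?d k A) + emeasure M (?d k B)) \<longlonglongrightarrow> 0"
    using A B by (intro tendsto_add_zero) (auto simp: rigidity_sets_def)
  have "(\<lambda>k. emeasure M (?d k (A \<union> B))) \<longlonglongrightarrow> 0"
    by (rule tendsto_sandwich[OF _ _ tendsto_const lim]) (intro always_eventually allI bound zero_le)+
  then show ?thesis
    using sets by (simp add: rigidity_sets_def)
qed

text \<open>Since \<open>S\<close> preserves the pseudometric \<open>\<mu>(A \<triangle> B)\<close>, rigidity passes to limits.\<close>

lemma rigidity_sets_closed:
  assumes S: "mps M S" and A: "A \<in> sets M"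
    and F: "\<And>m. F m \<in> rigidity_sets M S n"
    and approx: "(\<lambda>m. emeasure M (sym_diff A (F m))) \<longlonglongrightarrow> 0"
  shows "A \<in> rigidity_sets M S n"
proof -
  let ?p = "\<lambda>k X. (S ^^ n k) -` X \<inter> space M"
  have Ssets: "\<And>k X. X \<in> sets M \<Longrightarrow> ?p k X \<in> sets M"
    using S measurable_sets[OF measurable_funpow] by (auto simp: mps_def)
  have Fsets: "F m \<in> sets M" for m
    using F by (simp add: rigidity_sets_def)
  have bound: "emeasure M (sym_diff (?p k A) A)
      \<le> emeasure M (sym_diff A (F m)) + emeasure M (sym_diff A (F m))
        + emeasure M (sym_diff (?p k (F m)) (F m))" for k m
  proof -
    define X where "X = ?p k (sym_diff A (F m))"
    define Y where "Y = sym_diff A (F m)"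
    define Z where "Z = sym_diff (?p k (F m)) (F m)"
    have "Y \<in> sets M" "Z \<in> sets M"
      using A Fsets Ssets by (auto simp: Y_def Z_def)
    then have sets: "X \<in> sets M" "Y \<in> sets M" "Z \<in> sets M"
      using Ssets unfolding X_def Y_def by blast+
    have "emeasure M (sym_diff (?p k A) A) \<le> emeasure M (X \<union> Y \<union> Z)"
      using sets by (intro emeasure_mono) (auto simp: X_def Y_def Z_def)
    also have "\<dots> \<le> emeasure M (X \<union> Y) + emeasure M Z"
      using sets by (intro emeasure_subadditive) auto
    also have "\<dots> \<le> emeasure M X + emeasure M Y + emeasure M Z"
      using sets by (intro add_right_mono emeasure_subadditive)
    also have "emeasure M X = emeasure M Y"
      unfolding X_def Y_def[symmetric] by (rule emeasure_vimage_mps[OF mps_funpow[OF S] sets(2)])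
    finally show ?thesis
      by (simp add: Y_def Z_def)
  qed
  have "(\<lambda>m. emeasure M (sym_diff A (F m)) + emeasure M (sym_diff A (F m))) \<longlonglongrightarrow> 0"
    using tendsto_add_zero[OF approx approx] .
  moreover have "(\<lambda>k. emeasure M (sym_diff (?p k (F m)) (F m))) \<longlonglongrightarrow> 0" for m
    using F by (simp add: rigidity_sets_def)
  ultimately have "(\<lambda>k. emeasure M (sym_diff (?p k A) A)) \<longlonglongrightarrow> 0"
    by (rule tendsto_zero_if_approximated_ennreal[OF bound])
  then show ?thesis
    using A by (simp add: rigidity_sets_def)
qed

lemma (in finite_measure) sigma_algebra_rigidity_sets:
  assumes S: "mps M S"
  shows "sigma_algebra (space M) (rigidity_sets M S n)"
  unfolding sigma_algebra_iff2
proof (intro conjI allI ballI impI)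
  have S_meas: "S \<in> M \<rightarrow>\<^sub>M M"
    using S by (simp add: mps_def)
  show "rigidity_sets M S n \<subseteq> Pow (space M)"
    using sets.sets_into_space by (auto simp: rigidity_sets_def)
  show "{} \<in> rigidity_sets M S n"
    by (rule rigidity_sets_empty)
  show "space M - A \<in> rigidity_sets M S n" if "A \<in> rigidity_sets M S n" for A
    using rigidity_sets_Diff[OF S_meas that] .
  fix A :: "nat \<Rightarrow> 'a set"
  assume A: "range A \<subseteq> rigidity_sets M S n"
  then have A_sets: "range A \<subseteq> sets M"
    by (auto simp: rigidity_sets_def)
  have partial: "(\<Union>i<m. A i) \<in> rigidity_sets M S n" for m
    using A by (induction m) (auto simp: lessThan_Suc rigidity_sets_empty intro: rigidity_sets_Un[OF S_meas])
  let ?R = "\<lambda>m. (\<Union>i. A i) - (\<Union>i<m. A i)"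
  have "(\<lambda>m. emeasure M (?R m)) \<longlonglongrightarrow> emeasure M (\<Inter>m. ?R m)"
    using A_sets by (intro Lim_emeasure_decseq) (auto simp: decseq_def)
  moreover have "(\<Inter>m. ?R m) = {}"
    by blast
  moreover have "sym_diff (\<Union>i. A i) (\<Union>i<m. A i) = ?R m" for m
    by blast
  ultimately have "(\<lambda>m. emeasure M (sym_diff (\<Union>i. A i) (\<Union>i<m. A i))) \<longlonglongrightarrow> 0"
    by (simp only: emeasure_empty)
  then show "(\<Union>i. A i) \<in> rigidity_sets M S n"
    using A_sets by (intro rigidity_sets_closed[OF S _ partial]) auto
qed

lemma space_Xstar: "space (Xstar M) = {\<gamma>. sets \<gamma> = sets M}"
  unfolding Xstar_def by (rule space_measure_of) auto

lemma sets_Xstar: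
  "sets (Xstar M) = sigma_sets {\<gamma>. sets \<gamma> = sets M}
     {{\<gamma>. sets \<gamma> = sets M \<and> emeasure \<gamma> B \<in> {a..b}} | B a b. B \<in> sets M \<and> a \<le> b}"
  unfolding Xstar_def by (rule sets_measure_of) auto

lemma measurable_emeasure_Xstar:
  assumes "B \<in> sets M"
  shows "(\<lambda>\<gamma>. emeasure \<gamma> B) \<in> borel_measurable (Xstar M)"
proof (rule borel_measurableI_le)
  fix c :: ennreal
  have "{\<gamma> \<in> space (Xstar M). emeasure \<gamma> B \<le> c}
      = {\<gamma>. sets \<gamma> = sets M \<and> emeasure \<gamma> B \<in> {0..c}}"
    by (auto simp: space_Xstar)
  also have "\<dots> \<in> sets (Xstar M)"
    unfolding sets_Xstar using assms
    by (intro sigma_sets.Basic CollectI exI[of _ B] exI[of _ "0::ennreal"] exI[of _ c]) simp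
  finally show "{\<gamma> \<in> space (Xstar M). emeasure \<gamma> B \<le> c} \<in> sets (Xstar M)" .
qed

lemma measurable_XstarI:
  assumes space: "\<And>x. x \<in> space N \<Longrightarrow> sets (f x) = sets M"
    and emeasure: "\<And>B. B \<in> sets M \<Longrightarrow> (\<lambda>x. emeasure (f x) B) \<in> borel_measurable N"
  shows "f \<in> N \<rightarrow>\<^sub>M Xstar M"
  unfolding Xstar_def
proof (rule measurable_measure_of)
  fix G
  assume "G \<in> {{\<gamma>. sets \<gamma> = sets M \<and> emeasure \<gamma> B \<in> {a..b}} | B a b. B \<in> sets M \<and> a \<le> b}"
  then obtain B a b where B: "B \<in> sets M" and G: "G = {\<gamma>. sets \<gamma> = sets M \<and> emeasure \<gamma> B \<in> {a..b}}"
    by blast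
  have [measurable]: "(\<lambda>x. emeasure (f x) B) \<in> borel_measurable N"
    using emeasure[OF B] .
  have "f -` G \<inter> space N = {x \<in> space N. emeasure (f x) B \<in> {a..b}}"
    using space by (auto simp: G)
  also have "\<dots> \<in> sets N"
    by measurable
  finally show "f -` G \<inter> space N \<in> sets N" .
qed (use space in auto)

lemma sets_Xstar_subset:
  assumes sigma: "sigma_algebra (space (Xstar M)) \<Sigma>"
    and levels: "\<And>B c. B \<in> sets M \<Longrightarrow> {\<gamma> \<in> space (Xstar M). emeasure \<gamma> B \<le> c} \<in> \<Sigma>"
  shows "sets (Xstar M) \<subseteq> \<Sigma>"
proof
  fix A
  assume A: "A \<in> sets (Xstar M)"
  define N where "N = measure_of (space (Xstar M)) \<Sigma> (\<lambda>_. 0)"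
  have N: "space N = space (Xstar M)" "sets N = \<Sigma>"
    using sigma_algebra.space_measure_of_eq[OF sigma] sigma_algebra.sets_measure_of_eq[OF sigma]
    by (simp_all add: N_def)
  have "(\<lambda>\<gamma>. \<gamma>) \<in> N \<rightarrow>\<^sub>M Xstar M"
  proof (intro measurable_XstarI borel_measurableI_le)
    show "{\<gamma> \<in> space N. emeasure \<gamma> B \<le> c} \<in> sets N" if "B \<in> sets M" for B c
      unfolding N using levels[OF that] .
  qed (simp add: N space_Xstar)
  then show "A \<in> \<Sigma>"
    using measurable_sets[of "\<lambda>\<gamma>. \<gamma>" N "Xstar M" A] A sets.sets_into_space[OF A]
    by (auto simp: N Int_absorb2)
qed

lemma sets_Tstar [simp]: "sets (Tstar M S \<gamma>) = sets M"
  by (simp add: Tstar_def)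

lemma emeasure_Tstar:
  assumes S: "S \<in> M \<rightarrow>\<^sub>M M" and \<gamma>: "sets \<gamma> = sets M" and B: "B \<in> sets M"
  shows "emeasure (Tstar M S \<gamma>) B = emeasure \<gamma> (S -` B \<inter> space M)"
proof -
  have "S \<in> \<gamma> \<rightarrow>\<^sub>M M"
    by (subst measurable_cong_sets[OF \<gamma> refl]) (rule S)
  then show ?thesis
    using emeasure_distr[of S \<gamma> M B] B sets_eq_imp_space_eq[OF \<gamma>] by (simp add: Tstar_def)
qed

lemma Tstar_funpow:
  assumes S: "S \<in> M \<rightarrow>\<^sub>M M" and \<gamma>: "sets \<gamma> = sets M"
  shows "(Tstar M S ^^ j) \<gamma> = Tstar M (S ^^ j) \<gamma>"
proof (induction j)
  case 0
  then show ?case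
    using \<gamma> by (simp add: Tstar_def id_def distr_id2)
next
  case (Suc j)
  have "distr (distr \<gamma> M (S ^^ j)) M S = distr \<gamma> M (S \<circ> S ^^ j)"
    by (intro distr_distr S) (subst measurable_cong_sets[OF \<gamma> refl], rule measurable_funpow[OF S])
  then show ?case
    using Suc by (simp add: Tstar_def comp_def)
qed

lemma measurable_Tstar:
  assumes S: "S \<in> M \<rightarrow>\<^sub>M M"
  shows "Tstar M S \<in> Xstar M \<rightarrow>\<^sub>M Xstar M"
proof (rule measurable_XstarI)
  fix B
  assume B: "B \<in> sets M"
  have "(\<lambda>\<gamma>. emeasure \<gamma> (S -` B \<inter> space M)) \<in> borel_measurable (Xstar M)"
    using measurable_sets[OF S B] by (rule measurable_emeasure_Xstar)
  then show "(\<lambda>\<gamma>. emeasure (Tstar M S \<gamma>) B) \<in> borel_measurable (Xstar M)"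
    by (rule measurable_cong[THEN iffD1, rotated]) (simp add: emeasure_Tstar[OF S _ B] space_Xstar)
qed simp

lemma emeasure_le_emeasure_sym_diff:
  assumes "A \<in> sets M" and "B \<in> sets M"
  shows "emeasure M A \<le> emeasure M B + emeasure M (sym_diff A B)"
proof -
  have "emeasure M A \<le> emeasure M (B \<union> sym_diff A B)"
    using assms by (intro emeasure_mono) auto
  also have "\<dots> \<le> emeasure M B + emeasure M (sym_diff A B)"
    using assms by (intro emeasure_subadditive) auto
  finally show ?thesis .
qed

lemma ennreal_level_crossing:
  fixes x y d c \<delta> :: ennreal
  assumes "x \<le> y + d" and "y \<le> x + d" and "x \<le> c \<longleftrightarrow> \<not> y \<le> c"
  shows "(c < x \<and> x \<le> c + \<delta>) \<or> (c < y \<and> y \<le> c + \<delta>) \<or> \<delta> \<le> d"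
proof (cases "\<delta> \<le> d")
  case False
  then have d: "d \<le> \<delta>"
    by simp
  consider "x \<le> c" "c < y" | "y \<le> c" "c < x"
    using assms(3) by force
  then show ?thesis
  proof cases
    case 1
    then show ?thesis
      using order_trans[OF assms(2) add_mono[OF 1(1) d]] by simp
  next
    case 2
    then show ?thesis
      using order_trans[OF assms(1) add_mono[OF 2(1) d]] by simp
  qed
qed simp

lemma (in finite_measure) emeasure_strip_above_tendsto_0:
  fixes f :: "'a \<Rightarrow> ennreal"
  assumes [measurable]: "f \<in> borel_measurable M"
  shows "(\<lambda>j. emeasure M {x \<in> space M. c < f x \<and> f x \<le> c + ennreal (1 / Suc j)}) \<longlonglongrightarrow> 0"
proof -
  let ?V = "\<lambda>j. {x \<in> space M. c < f x \<and> f x \<le> c + ennreal (1 / Suc j)}"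
  have "decseq ?V"
    by (intro decseq_SucI) (auto intro: order_trans[OF _ add_left_mono] ennreal_leI
        simp: frac_le)
  then have "(\<lambda>j. emeasure M (?V j)) \<longlonglongrightarrow> emeasure M (\<Inter>j. ?V j)"
    by (intro Lim_emeasure_decseq) auto
  moreover have "(\<Inter>j. ?V j) = {}"
  proof -
    have "f x \<le> c" if "\<And>j. f x \<le> c + ennreal (1 / Suc j)" for x
    proof (rule ennreal_le_epsilon)
      fix e :: real
      assume "0 < e"
      then obtain j where "1 / real (Suc j) < e"
        by (rule nat_approx_posE)
      then show "f x \<le> c + ennreal e"
        using that[of j] by (meson add_left_mono ennreal_leI less_imp_le order_trans)
    qed
    then show ?thesis
      by (auto simp: not_le[symmetric])
  qed
  ultimately show ?thesis
    by simp
qed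

locale quasi_factor_system =
  fixes M :: "'a measure" and T :: "'a \<Rightarrow> 'a" and \<xi> :: "'a measure measure"
  assumes T_measurable: "T \<in> M \<rightarrow>\<^sub>M M" and quasi_factor: "quasi_factor M T \<xi>"
begin

sublocale prob_space \<xi>
  using quasi_factor by (simp add: quasi_factor_def)

lemma sets_xi: "sets \<xi> = sets (Xstar M)"
  using quasi_factor by (simp add: quasi_factor_def)

lemma space_xi: "space \<xi> = {\<gamma>. sets \<gamma> = sets M}"
  using sets_eq_imp_space_eq[OF sets_xi] by (simp add: space_Xstar)

lemma measurable_emeasure_xi [measurable]:
  "B \<in> sets M \<Longrightarrow> (\<lambda>\<gamma>. emeasure \<gamma> B) \<in> borel_measurable \<xi>"
  by (subst measurable_cong_sets[OF sets_xi refl]) (rule measurable_emeasure_Xstar)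

lemma mps_Tstar: "mps \<xi> (Tstar M T)"
  using quasi_factor measurable_Tstar[OF T_measurable]
  by (simp add: mps_def quasi_factor_def measurable_cong_sets[OF sets_xi sets_xi])

lemma emeasure_barycenter:
  assumes "D \<in> sets M"
  shows "emeasure M D = (\<integral>\<^sup>+ \<gamma>. emeasure \<gamma> D \<partial>\<xi>)"
proof -
  have "(\<integral>\<^sup>+ x. indicator D x \<partial>M) = (\<integral>\<^sup>+ \<gamma>. (\<integral>\<^sup>+ x. indicator D x \<partial>\<gamma>) \<partial>\<xi>)"
    using quasi_factor borel_measurable_indicator[OF assms] unfolding quasi_factor_def by blast
  then have "emeasure M D = (\<integral>\<^sup>+ \<gamma>. (\<integral>\<^sup>+ x. indicator D x \<partial>\<gamma>) \<partial>\<xi>)"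
    using assms by simp
  also have "\<dots> = (\<integral>\<^sup>+ \<gamma>. emeasure \<gamma> D \<partial>\<xi>)"
    using assms by (intro nn_integral_cong) (simp add: space_xi)
  finally show ?thesis .
qed

lemma emeasure_level_le_barycenter:
  assumes D: "D \<in> sets M" and \<delta>: "0 < \<delta>"
  shows "emeasure \<xi> {\<gamma> \<in> space \<xi>. ennreal \<delta> \<le> emeasure \<gamma> D} \<le> ennreal (1 / \<delta>) * emeasure M D"
proof -
  have "ennreal \<delta> \<le> d \<longleftrightarrow> 1 \<le> ennreal (1 / \<delta>) * d" for d
    using \<delta> by (cases d) (auto simp flip: ennreal_mult simp: ennreal_top_mult field_simps)
  then have "{\<gamma> \<in> space \<xi>. ennreal \<delta> \<le> emeasure \<gamma> D}
      = {\<gamma> \<in> space \<xi>. 1 \<le> ennreal (1 / \<delta>) * emeasure \<gamma> D}"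
    by simp
  also have "emeasure \<xi> \<dots> \<le> ennreal (1 / \<delta>) * (\<integral>\<^sup>+ \<gamma>. emeasure \<gamma> D * indicator (space \<xi>) \<gamma> \<partial>\<xi>)"
    using D by (intro nn_integral_Markov_inequality) auto
  also have "(\<integral>\<^sup>+ \<gamma>. emeasure \<gamma> D * indicator (space \<xi>) \<gamma> \<partial>\<xi>) = emeasure M D"
    unfolding emeasure_barycenter[OF D] by (intro nn_integral_cong) simp
  finally show ?thesis .
qed

lemma vimage_Tstar_funpow_level:
  assumes "B \<in> sets M"
  shows "(Tstar M T ^^ j) -` {\<gamma> \<in> space \<xi>. P (emeasure \<gamma> B)} \<inter> space \<xi>
    = {\<gamma> \<in> space \<xi>. P (emeasure \<gamma> ((T ^^ j) -` B \<inter> space M))}"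
proof -
  have space: "(Tstar M T ^^ j) \<gamma> \<in> space \<xi>"
    and emeasure: "emeasure ((Tstar M T ^^ j) \<gamma>) B = emeasure \<gamma> ((T ^^ j) -` B \<inter> space M)"
    if "\<gamma> \<in> space \<xi>" for \<gamma>
    using that assms
    by (simp_all add: space_xi Tstar_funpow[OF T_measurable]
        emeasure_Tstar[OF measurable_funpow[OF T_measurable]])
  show ?thesis
    by (auto simp: space emeasure)
qed

text \<open>If T_*^m moves \<gamma> across the level c, then \<gamma> or its image lies in the strip of width
  \<delta> above c, or \<gamma> gives mass at least \<delta> to T^-m B \<triangle> B; Markov's inequality bounds the
  last event by the barycenter.\<close>

lemma emeasure_level_set_sym_diff_le:
  fixes c :: ennreal and \<delta> :: real
  assumes B: "B \<in> sets M" and \<delta>: "0 < \<delta>"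
  defines "E \<equiv> {\<gamma> \<in> space \<xi>. emeasure \<gamma> B \<le> c}"
    and "V \<equiv> {\<gamma> \<in> space \<xi>. c < emeasure \<gamma> B \<and> emeasure \<gamma> B \<le> c + ennreal \<delta>}"
  shows "emeasure \<xi> (sym_diff ((Tstar M T ^^ m) -` E \<inter> space \<xi>) E)
    \<le> 2 * emeasure \<xi> V + ennreal (1 / \<delta>) * emeasure M (sym_diff ((T ^^ m) -` B \<inter> space M) B)"
proof -
  let ?p = "\<lambda>X. (Tstar M T ^^ m) -` X \<inter> space \<xi>"
  define Bm where "Bm = (T ^^ m) -` B \<inter> space M"
  define D where "D = sym_diff Bm B"
  define W where "W = {\<gamma> \<in> space \<xi>. ennreal \<delta> \<le> emeasure \<gamma> D}"
  have Bm: "Bm \<in> sets M" and D: "D \<in> sets M"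
    using B measurable_sets[OF measurable_funpow[OF T_measurable]] by (auto simp: Bm_def D_def)
  have [measurable]: "V \<in> sets \<xi>" "W \<in> sets \<xi>" "?p V \<in> sets \<xi>"
    using B D measurable_sets[OF measurable_funpow] mps_Tstar
    by (auto simp: V_def W_def mps_def)
  have vimage_E: "?p E = {\<gamma> \<in> space \<xi>. emeasure \<gamma> Bm \<le> c}"
    unfolding E_def Bm_def by (rule vimage_Tstar_funpow_level[OF B])
  have vimage_V: "?p V = {\<gamma> \<in> space \<xi>. c < emeasure \<gamma> Bm \<and> emeasure \<gamma> Bm \<le> c + ennreal \<delta>}"
    unfolding V_def Bm_def by (rule vimage_Tstar_funpow_level[OF B])
  have "sym_diff (?p E) E \<subseteq> V \<union> ?p V \<union> W"
  proof
    fix \<gamma>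
    assume \<gamma>: "\<gamma> \<in> sym_diff (?p E) E"
    then have space_\<gamma>: "\<gamma> \<in> space \<xi>"
      by (auto simp: E_def)
    then have "sets \<gamma> = sets M"
      by (simp add: space_xi)
    moreover have "sym_diff B Bm = D"
      by (auto simp: D_def)
    ultimately have "emeasure \<gamma> B \<le> emeasure \<gamma> Bm + emeasure \<gamma> D"
      "emeasure \<gamma> Bm \<le> emeasure \<gamma> B + emeasure \<gamma> D"
      using emeasure_le_emeasure_sym_diff[of _ \<gamma>] B Bm by (metis D_def)+
    moreover have "emeasure \<gamma> B \<le> c \<longleftrightarrow> \<not> emeasure \<gamma> Bm \<le> c"
      using \<gamma> unfolding vimage_E by (auto simp: E_def)
    ultimately show "\<gamma> \<in> V \<union> ?p V \<union> W"
      using ennreal_level_crossing[of "emeasure \<gamma> B" "emeasure \<gamma> Bm" "emeasure \<gamma> D" c "ennreal \<delta>"]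
        space_\<gamma> unfolding vimage_V by (auto simp: V_def W_def)
  qed
  then have "emeasure \<xi> (sym_diff (?p E) E) \<le> emeasure \<xi> (V \<union> ?p V \<union> W)"
    by (intro emeasure_mono) measurable
  also have "\<dots> \<le> emeasure \<xi> V + emeasure \<xi> (?p V) + emeasure \<xi> W"
    by (intro order.trans[OF emeasure_subadditive] add_right_mono) measurable
  also have "emeasure \<xi> (?p V) = emeasure \<xi> V"
    by (intro emeasure_vimage_mps mps_funpow mps_Tstar) measurable
  also have "emeasure \<xi> W \<le> ennreal (1 / \<delta>) * emeasure M D"
    unfolding W_def by (rule emeasure_level_le_barycenter[OF D \<delta>])
  finally show ?thesis
    by (simp add: mult_2 D_def Bm_def)
qed

lemma level_set_in_rigidity_sets:
  assumes B: "B \<in> sets M"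
    and rigid_B: "(\<lambda>k. emeasure M (sym_diff ((T ^^ n k) -` B \<inter> space M) B)) \<longlonglongrightarrow> 0"
  shows "{\<gamma> \<in> space \<xi>. emeasure \<gamma> B \<le> c} \<in> rigidity_sets \<xi> (Tstar M T) n"
proof -
  define E where "E = {\<gamma> \<in> space \<xi>. emeasure \<gamma> B \<le> c}"
  define V where "V j = {\<gamma> \<in> space \<xi>. c < emeasure \<gamma> B \<and> emeasure \<gamma> B \<le> c + ennreal (1 / Suc j)}" for j
  have "E \<in> sets \<xi>"
    using B unfolding E_def by measurable
  have bound: "emeasure \<xi> (sym_diff ((Tstar M T ^^ n k) -` E \<inter> space \<xi>) E)
      \<le> 2 * emeasure \<xi> (V j)
        + ennreal (Suc j) * emeasure M (sym_diff ((T ^^ n k) -` B \<inter> space M) B)" for j k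
    using emeasure_level_set_sym_diff_le[OF B, where \<delta>="1 / real (Suc j)" and m="n k" and c=c] by (simp add: E_def V_def)
  have "(\<lambda>j. emeasure \<xi> (V j)) \<longlonglongrightarrow> 0"
    unfolding V_def using B by (intro emeasure_strip_above_tendsto_0) measurable
  then have "(\<lambda>j. 2 * emeasure \<xi> (V j)) \<longlonglongrightarrow> 0"
    using ennreal_tendsto_cmult[of 2] by fastforce
  moreover have "(\<lambda>k. ennreal (Suc j) * emeasure M (sym_diff ((T ^^ n k) -` B \<inter> space M) B)) \<longlonglongrightarrow> 0" for j
    using ennreal_tendsto_cmult[OF _ rigid_B, of "ennreal (Suc j)"] by simp
  ultimately have "(\<lambda>k. emeasure \<xi> (sym_diff ((Tstar M T ^^ n k) -` E \<inter> space \<xi>) E)) \<longlonglongrightarrow> 0"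
    by (rule tendsto_zero_if_approximated_ennreal[OF bound])
  then show ?thesis
    using \<open>E \<in> sets \<xi>\<close> by (simp add: rigidity_sets_def E_def[symmetric])
qed

lemma level_set_in_rigidity_sets_sigma_finite:
  assumes "sigma_finite_measure M"
    and rigid: "{A \<in> sets M. emeasure M A < \<infinity>} \<subseteq> rigidity_sets M T n"
    and B: "B \<in> sets M"
  shows "{\<gamma> \<in> space \<xi>. emeasure \<gamma> B \<le> c} \<in> rigidity_sets \<xi> (Tstar M T) n"
proof -
  obtain X where X: "range X \<subseteq> sets M" "(\<Union>i. X i) = space M" "\<And>i. emeasure M (X i) \<noteq> \<infinity>" "incseq X"
    using sigma_finite_measure.sigma_finite_incseq[OF assms(1)] by metis
  have "B \<inter> X j \<in> rigidity_sets M T n" for j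
  proof -
    have "emeasure M (B \<inter> X j) \<le> emeasure M (X j)"
      using X(1) by (intro emeasure_mono) auto
    then show ?thesis
      using rigid B X(1) X(3)[of j] by (auto simp: top.not_eq_extremum intro: le_less_trans)
  qed
  then have levels: "{\<gamma> \<in> space \<xi>. emeasure \<gamma> (B \<inter> X j) \<le> c} \<in> rigidity_sets \<xi> (Tstar M T) n" for j
    by (intro level_set_in_rigidity_sets) (auto simp: rigidity_sets_def)
  have "emeasure \<gamma> B = (SUP j. emeasure \<gamma> (B \<inter> X j))" if "\<gamma> \<in> space \<xi>" for \<gamma>
  proof -
    have "(\<Union>j. B \<inter> X j) = B"
      using X(2) sets.sets_into_space[OF B] by auto
    moreover have "range (\<lambda>j. B \<inter> X j) \<subseteq> sets \<gamma>" "incseq (\<lambda>j. B \<inter> X j)"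
      using that B X(1) X(4) by (auto simp: space_xi incseq_def subset_eq)
    ultimately show ?thesis
      using SUP_emeasure_incseq[of "\<lambda>j. B \<inter> X j" \<gamma>] by simp
  qed
  then have "{\<gamma> \<in> space \<xi>. emeasure \<gamma> B \<le> c} = (\<Inter>j. {\<gamma> \<in> space \<xi>. emeasure \<gamma> (B \<inter> X j) \<le> c})"
    by (auto simp: SUP_le_iff)
  also have "\<dots> \<in> rigidity_sets \<xi> (Tstar M T) n"
    using levels by (intro sigma_algebra.countable_INT[OF sigma_algebra_rigidity_sets[OF mps_Tstar]]) auto
  finally show ?thesis .
qed

lemma sets_subset_rigidity_sets:
  assumes "sigma_finite_measure M"
    and "{A \<in> sets M. emeasure M A < \<infinity>} \<subseteq> rigidity_sets M T n"
  shows "sets \<xi> \<subseteq> rigidity_sets \<xi> (Tstar M T) n"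
  unfolding sets_xi
proof (rule sets_Xstar_subset)
  have "space (Xstar M) = space \<xi>"
    by (simp add: space_xi space_Xstar)
  then show "sigma_algebra (space (Xstar M)) (rigidity_sets \<xi> (Tstar M T) n)"
    and "\<And>B c. B \<in> sets M \<Longrightarrow> {\<gamma> \<in> space (Xstar M). emeasure \<gamma> B \<le> c} \<in> rigidity_sets \<xi> (Tstar M T) n"
    using sigma_algebra_rigidity_sets[OF mps_Tstar] level_set_in_rigidity_sets_sigma_finite[OF assms]
    by simp_all
qed

end

theorem proposition3p1:
  fixes M :: "'a measure" and T :: "'a \<Rightarrow> 'a" and S :: "'b::polish_space set"
    and \<xi> :: "'a measure measure"
  assumes "sigma_finite_measure M"
    and "standard_borel_via M S"
    and "mps M T"
    and "rigid M T"
    and "quasi_factor M T \<xi>"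
  shows "rigid \<xi> (Tstar M T)"
proof -
  interpret quasi_factor_system M T \<xi>
    using assms(3,5) by unfold_locales (simp_all add: mps_def)
  obtain n where n: "strict_mono n" "{A \<in> sets M. emeasure M A < \<infinity>} \<subseteq> rigidity_sets M T n"
    using assms(4) by (auto simp: rigid_iff_rigidity_sets)
  then have "sets \<xi> \<subseteq> rigidity_sets \<xi> (Tstar M T) n"
    using assms(1) by (intro sets_subset_rigidity_sets)
  then show ?thesis
    using n(1) by (auto simp: rigid_iff_rigidity_sets)
qed

end
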